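(* In an instance of the large-market pricing problem described in the context, let $\vec x^1,\vec x^2$ be buyer demand vectors with $\vec x^2\ge\vec x^1$ componentwise, and let $\vec z^1,\vec z^2$ be min-cost flows for $\vec x^1,\vec x^2$ respectively. Then $$\sum_t\left(C_t(z^2_t)-C_t(z^1_t)\right)\ge\sum_i r_i(\vec z^1)\,(x^2_i-x^1_i).$$
   Context: Finite item set $S$, finite set $B$ of buyer types, bipartite graph $G=(B\cup S,E)$, $S_i=\{t:(i,t)\in E\}$. Item $t$ has convex continuously differentiable production cost $C_t$ with derivative $c_t$. A feasible allocation for demand vector $\vec x$ (indexed by $B$, nonnegative) is $z_t(i)\ge0$ with $z_t(i)>0$ only if $(i,t)\in E$ and $\sum_tz_t(i)=x_i$; $z_t=\sum_iz_t(i)$. A min-cost flow for $\vec x$ is a feasible allocation minimizing $\sum_tC_t(z_t)$. For a min-cost flow $\vec z$, $r_i(\vec z)=\min_{(i,t)\in E}c_t(z_t)$, which equals the marginal cost of every item buyer type $i$ receives in $\vec z$. *)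

theory Defs
  imports "HOL-Analysis.Analysis"
begin

text \<open>Allocations: z t i is the amount of item t given to buyer type i.\<close>

definition feasible_alloc ::
  "'b set \<Rightarrow> 's set \<Rightarrow> ('b \<times> 's) set \<Rightarrow> ('b \<Rightarrow> real) \<Rightarrow> ('s \<Rightarrow> 'b \<Rightarrow> real) \<Rightarrow> bool" where
  "feasible_alloc B S E x z \<longleftrightarrow>
     (\<forall>i\<in>B. \<forall>t\<in>S. z t i \<ge> 0) \<and>
     (\<forall>i\<in>B. \<forall>t\<in>S. z t i > 0 \<longrightarrow> (i, t) \<in> E) \<and>
     (\<forall>i\<in>B. (\<Sum>t\<in>S. z t i) = x i)"

definition load :: "'b set \<Rightarrow> ('s \<Rightarrow> 'b \<Rightarrow> real) \<Rightarrow> 's \<Rightarrow> real" where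
  "load B z t = (\<Sum>i\<in>B. z t i)"

definition total_cost ::
  "'b set \<Rightarrow> 's set \<Rightarrow> ('s \<Rightarrow> real \<Rightarrow> real) \<Rightarrow> ('s \<Rightarrow> 'b \<Rightarrow> real) \<Rightarrow> real" where
  "total_cost B S C z = (\<Sum>t\<in>S. C t (load B z t))"

definition min_cost_flow ::
  "'b set \<Rightarrow> 's set \<Rightarrow> ('b \<times> 's) set \<Rightarrow> ('s \<Rightarrow> real \<Rightarrow> real) \<Rightarrow> ('b \<Rightarrow> real)
    \<Rightarrow> ('s \<Rightarrow> 'b \<Rightarrow> real) \<Rightarrow> bool" where
  "min_cost_flow B S E C x z \<longleftrightarrow>
     feasible_alloc B S E x z \<and>
     (\<forall>z'. feasible_alloc B S E x z' \<longrightarrow> total_cost B S C z \<le> total_cost B S C z')"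

definition marg_price ::
  "'b set \<Rightarrow> ('b \<times> 's) set \<Rightarrow> ('s \<Rightarrow> real \<Rightarrow> real) \<Rightarrow> ('s \<Rightarrow> 'b \<Rightarrow> real) \<Rightarrow> 'b \<Rightarrow> real" where
  "marg_price B E c z i = Min {c t (load B z t) | t. (i, t) \<in> E}"

end

theory Submission
  imports Defs
begin

text \<open>In a min-cost flow the marginal costs seen by a buyer type are equalised: moving a small
amount of flow from an item it uses to any adjacent item cannot lower the cost, so every item
used by type \<open>i\<close> has marginal cost exactly \<open>r\<^sub>i\<close> and every adjacent item at least \<open>r\<^sub>i\<close>.
Pricing the flow change \<open>z\<^sup>2 - z\<^sup>1\<close> at the marginal costs of \<open>z\<^sup>1\<close> therefore costs at least
\<open>\<Sum>\<^sub>i r\<^sub>i (x\<^sup>2\<^sub>i - x\<^sup>1\<^sub>i)\<close>, and by convexity each \<open>C\<^sub>t\<close> lies above its tangent at \<open>z\<^sup>1\<^sub>t\<close>, so the true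
cost increase is even larger.\<close>

lemma has_real_derivative_le_right_slope:
  fixes g :: "real \<Rightarrow> real"
  assumes deriv: "(g has_real_derivative D) (at a within {a..b})" and "a < b"
    and slope: "\<And>h. a < h \<Longrightarrow> h \<le> b \<Longrightarrow> g h - g a \<le> K * (h - a)"
  shows "D \<le> K"
proof (rule tendsto_upperbound)
  show "((\<lambda>h. (g h - g a) / (h - a)) \<longlongrightarrow> D) (at a within {a..b})"
    using deriv by (simp add: has_field_derivative_iff)
  show "\<forall>\<^sub>F h in at a within {a..b}. (g h - g a) / (h - a) \<le> K"
    unfolding eventually_at_filter
    by (intro always_eventually) (auto simp: divide_le_eq slope)
  show "\<not> trivial_limit (at a within {a..b})"
    using \<open>a < b\<close> by (simp add: at_within_Icc_at_right)
qed

lemma convex_on_above_tangent_within: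
  fixes f :: "real \<Rightarrow> real"
  assumes convex: "convex_on A f" and "c \<in> A" and "x \<in> A"
    and deriv: "(f has_real_derivative D) (at c within A)"
  shows "D * (x - c) \<le> f x - f c"
proof -
  define p where "p h = c + h * (x - c)" for h
  have p_in: "p h \<in> A" if "h \<in> {0..1}" for h
  proof -
    have "p h = (1 - h) *\<^sub>R c + h *\<^sub>R x" by (simp add: p_def algebra_simps)
    also have "\<dots> \<in> A"
      using that by (intro convexD convex_on_imp_convex[OF convex] \<open>c \<in> A\<close> \<open>x \<in> A\<close>) auto
    finally show ?thesis .
  qed
  have chain: "(f \<circ> p has_real_derivative D * (x - c)) (at 0 within {0..1})"
  proof (rule DERIV_image_chain)
    have "p ` {0..1} \<subseteq> A" using p_in by blast
    then show "(f has_real_derivative D) (at (p 0) within p ` {0..1})"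
      using has_field_derivative_subset[OF deriv] by (simp add: p_def)
    show "(p has_real_derivative x - c) (at 0 within {0..1})"
      unfolding p_def by (auto intro!: derivative_eq_intros)
  qed
  have chord: "(f \<circ> p) h - (f \<circ> p) 0 \<le> (f x - f c) * (h - 0)" if "0 < h" "h \<le> 1" for h
  proof -
    have "f ((1 - h) *\<^sub>R c + h *\<^sub>R x) \<le> (1 - h) * f c + h * f x"
      using convex \<open>c \<in> A\<close> \<open>x \<in> A\<close> that by (intro convex_onD) auto
    moreover have "(1 - h) *\<^sub>R c + h *\<^sub>R x = p h" by (simp add: p_def algebra_simps)
    ultimately have "f (p h) \<le> f c + h * (f x - f c)" by (simp add: algebra_simps)
    then show ?thesis by (simp add: p_def mult.commute)
  qed
  show ?thesis
    using has_real_derivative_le_right_slope[OF chain zero_less_one chord] .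
qed

lemma feasible_alloc_not_pos_eq_0:
  assumes "feasible_alloc B S E x z" and "i \<in> B" and "t \<in> S" and "\<not> 0 < z t i"
  shows "z t i = 0"
  using assms unfolding feasible_alloc_def by force

lemma load_nonneg:
  assumes "feasible_alloc B S E x z" and "t \<in> S"
  shows "0 \<le> load B z t"
  using assms unfolding feasible_alloc_def load_def by (simp add: sum_nonneg)

lemma load_ge_alloc:
  assumes "finite B" and "feasible_alloc B S E x z" and "i \<in> B" and "t \<in> S"
  shows "z t i \<le> load B z t"
  using assms unfolding feasible_alloc_def load_def by (intro member_le_sum) auto

definition shift_alloc ::
  "'b \<Rightarrow> 's \<Rightarrow> 's \<Rightarrow> real \<Rightarrow> ('s \<Rightarrow> 'b \<Rightarrow> real) \<Rightarrow> 's \<Rightarrow> 'b \<Rightarrow> real" where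
  "shift_alloc i t t' e z =
     (\<lambda>s j. z s j - (if j = i \<and> s = t then e else 0) + (if j = i \<and> s = t' then e else 0))"

lemma feasible_alloc_shift_alloc:
  assumes "finite S" and feasible: "feasible_alloc B S E x z"
    and "t \<in> S" and "t' \<in> S" and "t \<noteq> t'" and "(i, t') \<in> E" and "0 \<le> e" and "e \<le> z t i"
  shows "feasible_alloc B S E x (shift_alloc i t t' e z)"
proof -
  have "(\<Sum>s\<in>S. shift_alloc i t t' e z s j) = (\<Sum>s\<in>S. z s j)" for j
    using assms(1,3,4) by (cases "j = i") (simp_all add: shift_alloc_def sum.distrib sum_subtractf)
  then show ?thesis
    using feasible assms(5-8) unfolding feasible_alloc_def shift_alloc_def
    by (auto split: if_splits)
qed

lemma load_shift_alloc:
  assumes "finite B" and "i \<in> B"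
  shows "load B (shift_alloc i t t' e z) s
           = load B z s - (if s = t then e else 0) + (if s = t' then e else 0)"
  using assms by (simp add: load_def shift_alloc_def sum.distrib sum_subtractf)

lemma total_cost_shift_alloc:
  assumes "finite B" and "finite S" and "i \<in> B" and "t \<in> S" and "t' \<in> S" and "t \<noteq> t'"
  shows "total_cost B S C (shift_alloc i t t' e z) - total_cost B S C z
           = (C t (load B z t - e) - C t (load B z t)) + (C t' (load B z t' + e) - C t' (load B z t'))"
proof -
  have "total_cost B S C (shift_alloc i t t' e z) - total_cost B S C z
          = (\<Sum>s\<in>S. (if s = t then C t (load B z t - e) - C t (load B z t) else 0)
                    + (if s = t' then C t' (load B z t' + e) - C t' (load B z t') else 0))"
    unfolding total_cost_def sum_subtractf[symmetric]
    using assms(6) by (intro sum.cong) (auto simp: load_shift_alloc[OF assms(1,3)])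
  also have "\<dots> = (C t (load B z t - e) - C t (load B z t)) + (C t' (load B z t' + e) - C t' (load B z t'))"
    using assms(2,4,5) by (simp add: sum.distrib)
  finally show ?thesis .
qed

lemma min_cost_flow_marginal_cost_le:
  assumes "finite B" and "finite S"
    and deriv: "\<forall>s\<in>S. \<forall>u\<ge>0. (C s has_real_derivative c s u) (at u within {0..})"
    and mcf: "min_cost_flow B S E C x z"
    and "i \<in> B" and "t \<in> S" and "t' \<in> S" and used: "0 < z t i" and "(i, t') \<in> E"
  shows "c t (load B z t) \<le> c t' (load B z t')"
proof (cases "t = t'")
  case False
  have feasible: "feasible_alloc B S E x z"
    using mcf by (simp add: min_cost_flow_def)
  define L L' where "L = load B z t" and "L' = load B z t'"
  define g where "g e = C t (L - e) + C t' (L' + e)" for e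
  \<comment> \<open>\<open>g e - g 0\<close> is the cost change of moving \<open>e\<close> units of \<open>i\<close>'s flow from \<open>t\<close> to \<open>t'\<close>,
     so optimality makes \<open>0\<close> a minimum of \<open>g\<close> on \<open>[0, z t i]\<close>.\<close>
  have L: "z t i \<le> L" and L': "0 \<le> L'"
    using load_ge_alloc load_nonneg assms feasible by (auto simp: L_def L'_def)
  have "(C t \<circ> (\<lambda>e. L - e) has_real_derivative c t L * -1) (at 0 within {0..z t i})"
  proof (rule DERIV_image_chain)
    have "(\<lambda>e. L - e) ` {0..z t i} \<subseteq> {0..}" using L by auto
    then show "(C t has_real_derivative c t L) (at (L - 0) within (\<lambda>e. L - e) ` {0..z t i})"
      by (rule has_field_derivative_subset[rotated]) (use deriv \<open>t \<in> S\<close> L used in auto)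
  qed (auto intro!: derivative_eq_intros)
  moreover have "(C t' \<circ> (\<lambda>e. L' + e) has_real_derivative c t' L' * 1) (at 0 within {0..z t i})"
  proof (rule DERIV_image_chain)
    have "(\<lambda>e. L' + e) ` {0..z t i} \<subseteq> {0..}" using L' by auto
    then show "(C t' has_real_derivative c t' L') (at (L' + 0) within (\<lambda>e. L' + e) ` {0..z t i})"
      by (rule has_field_derivative_subset[rotated]) (use deriv \<open>t' \<in> S\<close> L' in auto)
  qed (auto intro!: derivative_eq_intros)
  ultimately have "((\<lambda>e. - g e) has_real_derivative c t L - c t' L') (at 0 within {0..z t i})"
    unfolding g_def o_def by (auto intro!: derivative_eq_intros)
  moreover have "- g e - - g 0 \<le> 0 * (e - 0)" if "0 < e" "e \<le> z t i" for e
  proof -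
    have "total_cost B S C z \<le> total_cost B S C (shift_alloc i t t' e z)"
      using mcf feasible_alloc_shift_alloc[OF assms(2) feasible assms(6,7) False assms(9), of e] that
      by (simp add: min_cost_flow_def)
    then show ?thesis
      using total_cost_shift_alloc[OF assms(1,2,5-7) False, of C e z] by (simp add: g_def L_def L'_def)
  qed
  ultimately have "c t L - c t' L' \<le> 0"
    using has_real_derivative_le_right_slope used by blast
  then show ?thesis by (simp add: L_def L'_def)
qed simp

lemma finite_marginal_costs:
  assumes "finite S" and "E \<subseteq> B \<times> S"
  shows "finite {c t (load B z t) | t. (i, t) \<in> E}"
proof -
  have "{c t (load B z t) | t. (i, t) \<in> E} \<subseteq> (\<lambda>t. c t (load B z t)) ` S"
    using assms(2) by blast
  then show ?thesis using assms(1) by (meson finite_imageI finite_subset)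
qed

lemma marg_price_le_marginal_cost:
  assumes "finite S" and "E \<subseteq> B \<times> S" and "(i, t) \<in> E"
  shows "marg_price B E c z i \<le> c t (load B z t)"
  unfolding marg_price_def
  using finite_marginal_costs[OF assms(1,2)] assms(3) by (intro Min_le) auto

lemma marg_price_attained:
  assumes "finite S" and "E \<subseteq> B \<times> S" and "(i, t) \<in> E"
  obtains t' where "(i, t') \<in> E" and "marg_price B E c z i = c t' (load B z t')"
proof -
  have "marg_price B E c z i \<in> {c t (load B z t) | t. (i, t) \<in> E}"
    unfolding marg_price_def
    using finite_marginal_costs[OF assms(1,2)] assms(3) by (intro Min_in) auto
  then show ?thesis using that by blast
qed

lemma marg_price_eq_marginal_cost:
  assumes "finite B" and "finite S" and "E \<subseteq> B \<times> S"
    and deriv: "\<forall>s\<in>S. \<forall>u\<ge>0. (C s has_real_derivative c s u) (at u within {0..})"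
    and mcf: "min_cost_flow B S E C x z"
    and "i \<in> B" and "t \<in> S" and used: "0 < z t i"
  shows "marg_price B E c z i = c t (load B z t)"
proof (rule antisym)
  have edge: "(i, t) \<in> E"
    using mcf assms(6,7) used by (auto simp: min_cost_flow_def feasible_alloc_def)
  then show "marg_price B E c z i \<le> c t (load B z t)"
    using assms(2,3) by (intro marg_price_le_marginal_cost)
  obtain t' where "(i, t') \<in> E" and t': "marg_price B E c z i = c t' (load B z t')"
    using marg_price_attained[OF assms(2,3) edge] .
  moreover have "t' \<in> S" using \<open>(i, t') \<in> E\<close> assms(3) by blast
  ultimately show "c t (load B z t) \<le> marg_price B E c z i"
    using min_cost_flow_marginal_cost_le[OF assms(1,2) deriv mcf assms(6,7) _ used] by simp
qed

lemma marg_price_demand_change_le: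
  assumes "finite B" and "finite S" and "E \<subseteq> B \<times> S"
    and deriv: "\<forall>s\<in>S. \<forall>u\<ge>0. (C s has_real_derivative c s u) (at u within {0..})"
    and mcf: "min_cost_flow B S E C x z" and feasible': "feasible_alloc B S E x' z'"
    and "i \<in> B"
  shows "marg_price B E c z i * (x' i - x i)
           \<le> (\<Sum>t\<in>S. c t (load B z t) * (z' t i - z t i))"
proof -
  let ?r = "marg_price B E c z i"
  have feasible: "feasible_alloc B S E x z"
    using mcf by (simp add: min_cost_flow_def)
  have used: "?r * z t i = c t (load B z t) * z t i" if "t \<in> S" for t
  proof (cases "z t i > 0")
    case True
    then show ?thesis using marg_price_eq_marginal_cost[OF assms(1-5) \<open>i \<in> B\<close> that] by simp
  next
    case False
    then show ?thesis using feasible_alloc_not_pos_eq_0[OF feasible \<open>i \<in> B\<close> that] by simp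
  qed
  have edges: "?r * z' t i \<le> c t (load B z t) * z' t i" if "t \<in> S" for t
  proof (cases "z' t i > 0")
    case True
    then have "(i, t) \<in> E" using feasible' \<open>i \<in> B\<close> that by (auto simp: feasible_alloc_def)
    then show ?thesis
      using marg_price_le_marginal_cost[OF assms(2,3)] True by (simp add: mult_right_mono)
  next
    case False
    then show ?thesis using feasible_alloc_not_pos_eq_0[OF feasible' \<open>i \<in> B\<close> that] by simp
  qed
  have "x i = (\<Sum>t\<in>S. z t i)" and "x' i = (\<Sum>t\<in>S. z' t i)"
    using feasible feasible' \<open>i \<in> B\<close> by (auto simp: feasible_alloc_def)
  then have "?r * (x' i - x i) = (\<Sum>t\<in>S. ?r * z' t i) - (\<Sum>t\<in>S. ?r * z t i)"
    by (simp add: right_diff_distrib sum_distrib_left)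
  also have "\<dots> \<le> (\<Sum>t\<in>S. c t (load B z t) * z' t i) - (\<Sum>t\<in>S. c t (load B z t) * z t i)"
  proof -
    have "(\<Sum>t\<in>S. ?r * z' t i) \<le> (\<Sum>t\<in>S. c t (load B z t) * z' t i)"
      by (intro sum_mono edges)
    moreover have "(\<Sum>t\<in>S. ?r * z t i) = (\<Sum>t\<in>S. c t (load B z t) * z t i)"
      by (intro sum.cong refl used)
    ultimately show ?thesis by linarith
  qed
  also have "\<dots> = (\<Sum>t\<in>S. c t (load B z t) * (z' t i - z t i))"
    by (simp add: right_diff_distrib sum_subtractf)
  finally show ?thesis .
qed

theorem lemma13:
  fixes B :: "'b set" and S :: "'s set" and E :: "('b \<times> 's) set"
    and C c :: "'s \<Rightarrow> real \<Rightarrow> real"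
    and x1 x2 :: "'b \<Rightarrow> real" and z1 z2 :: "'s \<Rightarrow> 'b \<Rightarrow> real"
  assumes "finite B" and "finite S" and "E \<subseteq> B \<times> S"
    and "\<forall>t\<in>S. convex_on {0..} (C t)"
    and "\<forall>t\<in>S. \<forall>u\<ge>0. (C t has_real_derivative c t u) (at u within {0..})"
    and "\<forall>t\<in>S. continuous_on {0..} (c t)"
    and "\<forall>i\<in>B. 0 \<le> x1 i" and "\<forall>i\<in>B. x1 i \<le> x2 i"
    and "min_cost_flow B S E C x1 z1" and "min_cost_flow B S E C x2 z2"
  shows "(\<Sum>t\<in>S. C t (load B z2 t) - C t (load B z1 t))
           \<ge> (\<Sum>i\<in>B. marg_price B E c z1 i * (x2 i - x1 i))"
proof -
  have feasible1: "feasible_alloc B S E x1 z1" and feasible2: "feasible_alloc B S E x2 z2"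
    using assms(9,10) by (simp_all add: min_cost_flow_def)
  let ?p = "\<lambda>t. c t (load B z1 t)"
  have "(\<Sum>i\<in>B. marg_price B E c z1 i * (x2 i - x1 i))
          \<le> (\<Sum>i\<in>B. \<Sum>t\<in>S. ?p t * (z2 t i - z1 t i))"
    by (intro sum_mono marg_price_demand_change_le[OF assms(1-3,5,9) feasible2])
  also have "\<dots> = (\<Sum>t\<in>S. ?p t * (load B z2 t - load B z1 t))"
    unfolding load_def
    by (subst sum.swap) (simp add: sum_distrib_left sum_subtractf right_diff_distrib)
  also have "\<dots> \<le> (\<Sum>t\<in>S. C t (load B z2 t) - C t (load B z1 t))"
    using assms(4,5) load_nonneg[OF feasible1] load_nonneg[OF feasible2]
    by (intro sum_mono convex_on_above_tangent_within) auto
  finally show ?thesis .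
qed

end
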